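(* Let $P_a,P_b,P_c,P_d$ be $n$-qubit Pauli strings with $P_a,P_b$ anticommuting. For $u,v$ let $\alpha_{uv}\in\{0,1\}$ equal $1$ iff $P_u$ and $P_v$ anticommute. Define $\beta\in\{0,1\}$ by $\beta=1$ iff $(\alpha_{ac},\alpha_{bc})\neq(0,0)$, $(\alpha_{ad},\alpha_{bd})\neq(0,0)$ and $(\alpha_{ac},\alpha_{bc})\neq(\alpha_{ad},\alpha_{bd})$. Let $C'$ be any Clifford circuit and $q$ any qubit such that $C'P_aC'^\dagger$ and $C'P_bC'^\dagger$ act non-trivially only on qubit $q$, and write $C'P_xC'^\dagger=\lambda_x\,\tau_x\otimes R_x$ for $x\in\{c,d\}$ as the factor on qubit $q$ tensored with the factor on the other qubits. Then $R_c$ and $R_d$ anticommute if and only if $\alpha_{cd}\oplus\beta=1$ (equivalently, iff $(\alpha_{ac},\alpha_{bc},\alpha_{ad},\alpha_{bd},\alpha_{cd})$ is one of the 16 tuples $(0,0,0,0,1),(0,0,0,1,1),(0,0,1,0,1),(0,0,1,1,1),(0,1,0,0,1),(0,1,0,1,1),(0,1,1,0,0),(0,1,1,1,0),(1,0,0,0,1),(1,0,0,1,0),(1,0,1,0,1),(1,0,1,1,0),(1,1,0,0,1),(1,1,0,1,0),(1,1,1,0,0),(1,1,1,1,1)$). Moreover, in that case there exists a Clifford circuit $C$ and two qubits $q_1\neq q_2$ such that each of $CP_aC^\dagger, CP_bC^\dagger, CP_cC^\dagger, CP_dC^\dagger$ acts non-trivially only on qubits in $\{q_1,q_2\}$.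
   Context: An $n$-qubit Pauli string is $\lambda\,\sigma_1\otimes\cdots\otimes\sigma_n$ with $\sigma_i\in\{I,X,Y,Z\}$, $\lambda\in\{\pm1,\pm i\}$; it acts non-trivially on qubit $i$ if $\sigma_i\neq I$. A Clifford circuit is a unitary generated by $H$, $S$, CNOT; conjugation by it maps Pauli strings to Pauli strings and preserves commutation relations. $\oplus$ denotes XOR. (Standard fact available: any two anticommuting Pauli strings can be simultaneously conjugated by some Clifford circuit to act non-trivially on a single common qubit, and $n\ge 2$ is assumed.) *)

theory Defs
  imports Main
begin

datatype pauli1 = PI | PX | PY | PZ

text \<open>Product of single-qubit Paulis: mult1 s t = (k, u) means s t = i^k u.\<close>
fun mult1 :: "pauli1 \<Rightarrow> pauli1 \<Rightarrow> nat \<times> pauli1" where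
  "mult1 PI t = (0, t)"
| "mult1 s PI = (0, s)"
| "mult1 PX PX = (0, PI)" | "mult1 PY PY = (0, PI)" | "mult1 PZ PZ = (0, PI)"
| "mult1 PX PY = (1, PZ)" | "mult1 PY PX = (3, PZ)"
| "mult1 PY PZ = (1, PX)" | "mult1 PZ PY = (3, PX)"
| "mult1 PZ PX = (1, PY)" | "mult1 PX PZ = (3, PY)"

text \<open>A Pauli string i^(ph) * op 0 \<otimes> ... \<otimes> op (n-1); the phase lambda = i^ph.\<close>
record pstring =
  ph :: nat
  op :: "nat \<Rightarrow> pauli1"

definition valid_pstring :: "nat \<Rightarrow> pstring \<Rightarrow> bool" where
  "valid_pstring n P \<longleftrightarrow> (\<forall>j\<ge>n. op P j = PI)"

definition pmult :: "nat \<Rightarrow> pstring \<Rightarrow> pstring \<Rightarrow> pstring" where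
  "pmult n P Q =
     \<lparr> ph = (ph P + ph Q + (\<Sum>j<n. fst (mult1 (op P j) (op Q j)))) mod 4,
       op = (\<lambda>j. snd (mult1 (op P j) (op Q j))) \<rparr>"

definition pneg :: "pstring \<Rightarrow> pstring" where
  "pneg P = P\<lparr> ph := (ph P + 2) mod 4 \<rparr>"

definition anticommute :: "nat \<Rightarrow> pstring \<Rightarrow> pstring \<Rightarrow> bool" where
  "anticommute n P Q \<longleftrightarrow> pmult n P Q = pneg (pmult n Q P)"

definition supported_in :: "nat \<Rightarrow> pstring \<Rightarrow> nat set \<Rightarrow> bool" where
  "supported_in n P A \<longleftrightarrow> (\<forall>j<n. op P j \<noteq> PI \<longrightarrow> j \<in> A)"

text \<open>The factor R of P = lambda tau \<otimes> R on the qubits other than q,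
  represented as the n-qubit string I_q \<otimes> R (phase absorbed into lambda).\<close>
definition rest_off :: "nat \<Rightarrow> pstring \<Rightarrow> pstring" where
  "rest_off q P = \<lparr> ph = 0, op = (op P)(q := PI) \<rparr>"

datatype gate = H nat | S nat | CNOT nat nat

type_synonym circuit = "gate list"

definition circuit_on :: "nat \<Rightarrow> circuit \<Rightarrow> bool" where
  "circuit_on n C \<longleftrightarrow> (\<forall>g\<in>set C. case g of
      H j \<Rightarrow> j < n | S j \<Rightarrow> j < n | CNOT a b \<Rightarrow> a < n \<and> b < n \<and> a \<noteq> b)"

text \<open>H s H^dagger = i^k s'\<close>
fun hconj :: "pauli1 \<Rightarrow> nat \<times> pauli1" where
  "hconj PI = (0, PI)" | "hconj PX = (0, PZ)" | "hconj PZ = (0, PX)" | "hconj PY = (2, PY)"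

text \<open>S s S^dagger = i^k s'\<close>
fun sconj :: "pauli1 \<Rightarrow> nat \<times> pauli1" where
  "sconj PI = (0, PI)" | "sconj PX = (0, PY)" | "sconj PY = (2, PX)" | "sconj PZ = (0, PZ)"

text \<open>CNOT (s \<otimes> t) CNOT^dagger = i^k (s' \<otimes> t'), control first.\<close>
fun cnotconj :: "pauli1 \<Rightarrow> pauli1 \<Rightarrow> nat \<times> pauli1 \<times> pauli1" where
  "cnotconj PI PI = (0, PI, PI)" | "cnotconj PI PX = (0, PI, PX)"
| "cnotconj PI PY = (0, PZ, PY)" | "cnotconj PI PZ = (0, PZ, PZ)"
| "cnotconj PX PI = (0, PX, PX)" | "cnotconj PX PX = (0, PX, PI)"
| "cnotconj PX PY = (0, PY, PZ)" | "cnotconj PX PZ = (2, PY, PY)"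
| "cnotconj PY PI = (0, PY, PX)" | "cnotconj PY PX = (0, PY, PI)"
| "cnotconj PY PY = (2, PX, PZ)" | "cnotconj PY PZ = (0, PX, PY)"
| "cnotconj PZ PI = (0, PZ, PI)" | "cnotconj PZ PX = (0, PZ, PX)"
| "cnotconj PZ PY = (0, PI, PY)" | "cnotconj PZ PZ = (0, PI, PZ)"

fun conj_gate :: "gate \<Rightarrow> pstring \<Rightarrow> pstring" where
  "conj_gate (H j) P = (case hconj (op P j) of (k, s) \<Rightarrow>
       \<lparr> ph = (ph P + k) mod 4, op = (op P)(j := s) \<rparr>)"
| "conj_gate (S j) P = (case sconj (op P j) of (k, s) \<Rightarrow>
       \<lparr> ph = (ph P + k) mod 4, op = (op P)(j := s) \<rparr>)"
| "conj_gate (CNOT a b) P = (case cnotconj (op P a) (op P b) of (k, s, t) \<Rightarrow>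
       \<lparr> ph = (ph P + k) mod 4, op = (op P)(a := s, b := t) \<rparr>)"

text \<open>Conjugation C P C^dagger by the circuit C = g_m ... g_1 given as [g_1, ..., g_m]
  (g_1 applied first).\<close>
definition conj_circ :: "circuit \<Rightarrow> pstring \<Rightarrow> pstring" where
  "conj_circ C P = fold conj_gate C P"

definition b2n :: "bool \<Rightarrow> nat" where
  "b2n b = (if b then 1 else 0)"

end

theory Submission
  imports Defs
begin

(* Two Pauli strings anticommute iff the number of qubits on which their factors anticommute is
   odd, and conjugation by a circuit acting inside a set T of qubits preserves the parity of this
   number counted over T. After C', the strings P_a and P_b live on qubit q alone, so whether a
   string anticommutes with them is read off its factor on q. Since the factors of P_a and P_b on q
   anticommute, a single-qubit Pauli is determined up to phase by its commutation pattern with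
   them, and comparing the patterns of the q-factors of P_c and P_d gives beta as their
   commutation; the rest of the parity is that of R_c and R_d. If R_c and R_d anticommute, the
   standard reduction (turn one factor into Z, clear it elsewhere by CNOTs targeting the pivot,
   then clear the other string by CNOTs controlled by the pivot) run on the qubits other than q
   fixes P_a and P_b and moves R_c and R_d onto one further qubit. *)

definition anticommute1 :: "pauli1 \<Rightarrow> pauli1 \<Rightarrow> bool" where
  "anticommute1 s t \<longleftrightarrow> s \<noteq> PI \<and> t \<noteq> PI \<and> s \<noteq> t"

definition anticomm_count :: "nat set \<Rightarrow> pstring \<Rightarrow> pstring \<Rightarrow> nat" where
  "anticomm_count T P Q = (\<Sum>j\<in>T. b2n (anticommute1 (op P j) (op Q j)))"

lemma even_b2n_iff [simp]: "even (b2n b) \<longleftrightarrow> \<not> b"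
  by (simp add: b2n_def)

lemma mult1_phase_swap:
  "fst (mult1 s t) mod 4 = (fst (mult1 t s) + 2 * b2n (anticommute1 s t)) mod 4"
  by (cases s; cases t; simp add: anticommute1_def b2n_def)

lemma mult1_op_swap: "snd (mult1 s t) = snd (mult1 t s)"
  by (cases s; cases t; simp)

lemma mod4_flip_iff:
  fixes x y c :: nat
  assumes "x mod 4 = (y + 2 * c) mod 4"
  shows "(a + x) mod 4 = ((a + y) mod 4 + 2) mod 4 \<longleftrightarrow> odd c"
proof -
  have "(a + x) mod 4 = (a + y + 2 * c) mod 4"
    by (metis assms add.assoc mod_add_right_eq)
  moreover have "((a + y) mod 4 + 2) mod 4 = (a + y + 2) mod 4"
    by (rule mod_add_left_eq)
  moreover have "((z::nat) + 2 * c) mod 4 = (z + 2) mod 4 \<longleftrightarrow> odd c" for z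
    by presburger
  ultimately show ?thesis by simp
qed

lemma anticommute_iff_odd_count: "anticommute n P Q \<longleftrightarrow> odd (anticomm_count {..<n} P Q)"
proof -
  let ?f = "\<lambda>j. fst (mult1 (op P j) (op Q j))"
  let ?g = "\<lambda>j. fst (mult1 (op Q j) (op P j))"
  let ?b = "\<lambda>j. b2n (anticommute1 (op P j) (op Q j))"
  have "sum ?f {..<n} mod 4 = (\<Sum>j<n. ?f j mod 4) mod 4" by (simp add: mod_sum_eq)
  also have "\<dots> = (\<Sum>j<n. (?g j + 2 * ?b j) mod 4) mod 4" using mult1_phase_swap by simp
  also have "\<dots> = (sum ?g {..<n} + 2 * anticomm_count {..<n} P Q) mod 4"
    by (simp add: mod_sum_eq anticomm_count_def sum.distrib sum_distrib_left)
  finally have "(ph P + ph Q + sum ?f {..<n}) mod 4 = ((ph Q + ph P + sum ?g {..<n}) mod 4 + 2) mod 4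
      \<longleftrightarrow> odd (anticomm_count {..<n} P Q)"
    by (subst add.commute[of "ph Q"]) (rule mod4_flip_iff)
  then show ?thesis
    unfolding anticommute_def pmult_def pneg_def by (simp add: mult1_op_swap)
qed

lemma op_conj_gate [simp]:
  "op (conj_gate (H j) P) = (op P)(j := snd (hconj (op P j)))"
  "op (conj_gate (S j) P) = (op P)(j := snd (sconj (op P j)))"
  "op (conj_gate (CNOT a b) P) = (op P)(a := fst (snd (cnotconj (op P a) (op P b))),
     b := snd (snd (cnotconj (op P a) (op P b))))"
  by (simp_all split: prod.split)

declare conj_gate.simps [simp del]

lemma conj_circ_Nil [simp]: "conj_circ [] P = P"
  by (simp add: conj_circ_def)

lemma conj_circ_Cons [simp]: "conj_circ (g # C) P = conj_circ C (conj_gate g P)"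
  by (simp add: conj_circ_def)

lemma conj_circ_append [simp]: "conj_circ (C1 @ C2) P = conj_circ C2 (conj_circ C1 P)"
  by (simp add: conj_circ_def)

fun gate_in :: "nat set \<Rightarrow> gate \<Rightarrow> bool" where
  "gate_in T (H j) \<longleftrightarrow> j \<in> T"
| "gate_in T (S j) \<longleftrightarrow> j \<in> T"
| "gate_in T (CNOT a b) \<longleftrightarrow> a \<in> T \<and> b \<in> T \<and> a \<noteq> b"

definition circuit_in :: "nat set \<Rightarrow> circuit \<Rightarrow> bool" where
  "circuit_in T C \<longleftrightarrow> (\<forall>g\<in>set C. gate_in T g)"

lemma circuit_in_Nil [simp]: "circuit_in T []"
  by (simp add: circuit_in_def)

lemma circuit_in_Cons [simp]: "circuit_in T (g # C) \<longleftrightarrow> gate_in T g \<and> circuit_in T C"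
  by (simp add: circuit_in_def)

lemma circuit_in_append [simp]: "circuit_in T (C1 @ C2) \<longleftrightarrow> circuit_in T C1 \<and> circuit_in T C2"
  by (auto simp add: circuit_in_def)

lemma circuit_in_mono: "circuit_in T C \<Longrightarrow> T \<subseteq> U \<Longrightarrow> circuit_in U C"
proof -
  have "gate_in T g \<Longrightarrow> T \<subseteq> U \<Longrightarrow> gate_in U g" for g
    by (cases g) auto
  then show "circuit_in T C \<Longrightarrow> T \<subseteq> U \<Longrightarrow> circuit_in U C"
    by (auto simp: circuit_in_def)
qed

lemma circuit_on_iff_circuit_in: "circuit_on n C \<longleftrightarrow> circuit_in {..<n} C"
proof -
  have "(case g of H j \<Rightarrow> j < n | S j \<Rightarrow> j < n | CNOT a b \<Rightarrow> a < n \<and> b < n \<and> a \<noteq> b)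
      \<longleftrightarrow> gate_in {..<n} g" for g
    by (cases g) auto
  then show ?thesis
    unfolding circuit_on_def circuit_in_def by simp
qed

lemma op_conj_circ_idle:
  "circuit_in T C \<Longrightarrow> \<forall>j\<in>T. op P j = PI \<Longrightarrow> op (conj_circ C P) = op P"
proof (induction C arbitrary: P)
  case (Cons g C)
  then have "op (conj_gate g P) = op P"
    by (cases g) (auto simp: fun_eq_iff)
  with Cons show ?case
    by (metis circuit_in_Cons conj_circ_Cons)
qed simp

lemma odd_anticomm_count_conj_gate:
  assumes "finite T" "gate_in T g"
  shows "odd (anticomm_count T (conj_gate g P) (conj_gate g Q)) \<longleftrightarrow> odd (anticomm_count T P Q)"
proof (cases g)
  case (H j)
  have "anticommute1 (snd (hconj s)) (snd (hconj t)) = anticommute1 s t" for s t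
    by (cases s; cases t; simp add: anticommute1_def)
  then have "anticomm_count T (conj_gate g P) (conj_gate g Q) = anticomm_count T P Q"
    unfolding H anticomm_count_def by (intro sum.cong) auto
  then show ?thesis by simp
next
  case (S j)
  have "anticommute1 (snd (sconj s)) (snd (sconj t)) = anticommute1 s t" for s t
    by (cases s; cases t; simp add: anticommute1_def)
  then have "anticomm_count T (conj_gate g P) (conj_gate g Q) = anticomm_count T P Q"
    unfolding S anticomm_count_def by (intro sum.cong) auto
  then show ?thesis by simp
next
  case (CNOT a b)
  with assms have ab: "{a, b} \<subseteq> T" "a \<noteq> b" by auto
  let ?P = "conj_gate g P" and ?Q = "conj_gate g Q"
  have split: "anticomm_count T X Y = anticomm_count (T - {a, b}) X Y + anticomm_count {a, b} X Y"
    for X Y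
    unfolding anticomm_count_def using ab(1) assms(1) by (rule sum.subset_diff)
  have "anticomm_count (T - {a, b}) ?P ?Q = anticomm_count (T - {a, b}) P Q"
    unfolding CNOT anticomm_count_def by (rule sum.cong) auto
  moreover have "odd (anticomm_count {a, b} ?P ?Q) \<longleftrightarrow> odd (anticomm_count {a, b} P Q)"
  proof -
    have "(anticommute1 (fst (snd (cnotconj s t))) (fst (snd (cnotconj u v))) \<noteq>
        anticommute1 (snd (snd (cnotconj s t))) (snd (snd (cnotconj u v))))
      \<longleftrightarrow> (anticommute1 s u \<noteq> anticommute1 t v)" for s t u v
      by (cases s; cases t; cases u; cases v; simp add: anticommute1_def)
    then show ?thesis
      using ab(2) by (simp add: CNOT anticomm_count_def)
  qed
  ultimately show ?thesis
    by (simp add: split)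
qed

lemma odd_anticomm_count_conj_circ:
  "finite T \<Longrightarrow> circuit_in T C \<Longrightarrow>
    odd (anticomm_count T (conj_circ C P) (conj_circ C Q)) \<longleftrightarrow> odd (anticomm_count T P Q)"
  by (induction C arbitrary: P Q) (simp_all add: odd_anticomm_count_conj_gate)

lemma anticommute_conj_circ:
  "circuit_on n C \<Longrightarrow> anticommute n (conj_circ C P) (conj_circ C Q) \<longleftrightarrow> anticommute n P Q"
  by (simp add: anticommute_iff_odd_count odd_anticomm_count_conj_circ circuit_on_iff_circuit_in)

lemma local_circuit_to_Z:
  "op P j \<noteq> PI \<Longrightarrow> \<exists>L. circuit_in {j} L \<and> op (conj_circ L P) = (op P)(j := PZ)"
proof (cases "op P j")
  case PX then show ?thesis by (intro exI[of _ "[H j]"]) simp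
next
  case PY then show ?thesis by (intro exI[of _ "[S j, H j]"]) simp
next
  case PZ then show ?thesis by (intro exI[of _ "[]"]) auto
qed simp

lemma local_circuit_to_X:
  "op P j \<noteq> PI \<Longrightarrow> \<exists>L. circuit_in {j} L \<and> op (conj_circ L P) = (op P)(j := PX)"
proof (cases "op P j")
  case PX then show ?thesis by (intro exI[of _ "[]"]) auto
next
  case PY then show ?thesis by (intro exI[of _ "[S j]"]) simp
next
  case PZ then show ?thesis by (intro exI[of _ "[H j]"]) simp
qed simp

(* CNOT j k maps Z_j Z_k to Z_k. *)
lemma clear_qubit_with_Z:
  assumes "op A k = PZ" "j \<noteq> k"
  shows "\<exists>L. circuit_in {j, k} L \<and> op (conj_circ L A) = (op A)(j := PI)"
proof (cases "op A j = PI")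
  case True
  then show ?thesis by (intro exI[of _ "[]"]) auto
next
  case False
  then obtain L where L: "circuit_in {j} L" "op (conj_circ L A) = (op A)(j := PZ)"
    using local_circuit_to_Z by blast
  show ?thesis
    using L assms circuit_in_mono[OF L(1), of "{j, k}"]
    by (intro exI[of _ "L @ [CNOT j k]"]) (auto simp: fun_eq_iff)
qed

(* CNOT k j fixes Z_k and maps X_k X_j, Y_k X_j to X_k, Y_k. *)
lemma clear_qubit_with_XY:
  assumes "op A k = PZ" "op A j = PI" "op B k \<in> {PX, PY}" "j \<noteq> k"
  shows "\<exists>L. circuit_in {j, k} L \<and> op (conj_circ L A) = op A \<and> op (conj_circ L B) = (op B)(j := PI)"
proof (cases "op B j = PI")
  case True
  then show ?thesis by (intro exI[of _ "[]"]) auto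
next
  case False
  then obtain L where L: "circuit_in {j} L" "op (conj_circ L B) = (op B)(j := PX)"
    using local_circuit_to_X by blast
  have "op (conj_circ L A) = op A"
    using op_conj_circ_idle[OF L(1)] assms(2) by simp
  then show ?thesis
    using L assms circuit_in_mono[OF L(1), of "{j, k}"]
    by (intro exI[of _ "L @ [CNOT k j]"]) (auto simp: fun_eq_iff)
qed

lemma clear_qubits:
  assumes "finite J" "R []"
    and "\<And>C j. R C \<Longrightarrow> j \<in> J \<Longrightarrow>
      \<exists>L. R (C @ L) \<and> op (conj_circ (C @ L) P) = (op (conj_circ C P))(j := PI)"
  shows "\<exists>C. R C \<and> (\<forall>j\<in>J. op (conj_circ C P) j = PI)"
  using assms(1,3)
proof (induction J rule: finite_induct)
  case empty
  then show ?case using assms(2) by blast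
next
  case (insert j J)
  then obtain C where C: "R C" "\<forall>i\<in>J. op (conj_circ C P) i = PI"
    by blast
  moreover obtain L where "R (C @ L)" "op (conj_circ (C @ L) P) = (op (conj_circ C P))(j := PI)"
    using insert.prems C(1) by blast
  ultimately show ?case
    by (intro exI[of _ "C @ L"]) auto
qed

lemma clear_outside_with_Z:
  assumes "finite T" "k \<in> T" "op A k = PZ"
  shows "\<exists>C. circuit_in T C \<and> op (conj_circ C A) k = PZ \<and> (\<forall>j\<in>T - {k}. op (conj_circ C A) j = PI)"
proof -
  let ?R = "\<lambda>C. circuit_in T C \<and> op (conj_circ C A) k = PZ"
  have "\<exists>L. ?R (C @ L) \<and> op (conj_circ (C @ L) A) = (op (conj_circ C A))(j := PI)"
    if R: "?R C" and j: "j \<in> T - {k}" for C j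
  proof -
    obtain L where "circuit_in {j, k} L" "op (conj_circ L (conj_circ C A)) = (op (conj_circ C A))(j := PI)"
      using clear_qubit_with_Z[of "conj_circ C A" k j] R j by auto
    then show ?thesis
      using R j assms(2) circuit_in_mono[of "{j, k}" L T] by auto
  qed
  then show ?thesis
    using clear_qubits[of "T - {k}" ?R A] assms by auto
qed

lemma clear_outside_with_XY:
  assumes "finite T" "k \<in> T" "op A k = PZ" "\<forall>j\<in>T - {k}. op A j = PI" "op B k \<in> {PX, PY}"
  shows "\<exists>C. circuit_in T C \<and> op (conj_circ C A) = op A \<and> (\<forall>j\<in>T - {k}. op (conj_circ C B) j = PI)"
proof -
  let ?R = "\<lambda>C. circuit_in T C \<and> op (conj_circ C A) = op A \<and> op (conj_circ C B) k \<in> {PX, PY}"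
  have "\<exists>L. ?R (C @ L) \<and> op (conj_circ (C @ L) B) = (op (conj_circ C B))(j := PI)"
    if R: "?R C" and j: "j \<in> T - {k}" for C j
  proof -
    obtain L where "circuit_in {j, k} L"
      "op (conj_circ L (conj_circ C A)) = op (conj_circ C A)"
      "op (conj_circ L (conj_circ C B)) = (op (conj_circ C B))(j := PI)"
      using clear_qubit_with_XY[of "conj_circ C A" k j "conj_circ C B"] R j assms(3,4) by auto
    then show ?thesis
      using R j assms(2) circuit_in_mono[of "{j, k}" L T] by auto
  qed
  then show ?thesis
    using clear_qubits[of "T - {k}" ?R B] assms by auto
qed

lemma anticomm_count_single_support:
  assumes "finite T" "k \<in> T" "\<forall>j\<in>T - {k}. op A j = PI"
  shows "anticomm_count T A B = b2n (anticommute1 (op A k) (op B k))"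
  using assms unfolding anticomm_count_def
  by (simp add: sum.remove anticommute1_def b2n_def)

lemma odd_anticomm_count_localize:
  assumes "finite T" "odd (anticomm_count T A B)"
  shows "\<exists>C k. circuit_in T C \<and> k \<in> T \<and>
    (\<forall>j\<in>T - {k}. op (conj_circ C A) j = PI \<and> op (conj_circ C B) j = PI)"
proof -
  have "anticomm_count T A B \<noteq> 0"
    using assms(2) by (metis even_zero)
  then obtain k where "k \<in> T" "b2n (anticommute1 (op A k) (op B k)) \<noteq> 0"
    unfolding anticomm_count_def using sum.not_neutral_contains_not_neutral by blast
  then have k: "k \<in> T" "op A k \<noteq> PI"
    by (auto simp: b2n_def anticommute1_def split: if_splits)
  then obtain L0 where L0: "circuit_in {k} L0" "op (conj_circ L0 A) = (op A)(k := PZ)"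
    using local_circuit_to_Z by blast
  then obtain C1 where C1: "circuit_in T C1" "op (conj_circ C1 (conj_circ L0 A)) k = PZ"
    "\<forall>j\<in>T - {k}. op (conj_circ C1 (conj_circ L0 A)) j = PI"
    using clear_outside_with_Z[OF assms(1) k(1), of "conj_circ L0 A"] by auto
  let ?A1 = "conj_circ (L0 @ C1) A" and ?B1 = "conj_circ (L0 @ C1) B"
  have L0C1: "circuit_in T (L0 @ C1)"
    using C1(1) circuit_in_mono[OF L0(1)] k(1) by simp
  have "odd (anticomm_count T ?A1 ?B1)"
    using odd_anticomm_count_conj_circ[OF assms(1) L0C1] assms(2) by blast
  then have "anticommute1 PZ (op ?B1 k)"
    using anticomm_count_single_support[OF assms(1) k(1)] C1(2,3) by simp
  then have "op ?B1 k \<in> {PX, PY}"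
    by (cases "op ?B1 k") (auto simp: anticommute1_def)
  then obtain C2 where C2: "circuit_in T C2" "op (conj_circ C2 ?A1) = op ?A1"
    "\<forall>j\<in>T - {k}. op (conj_circ C2 ?B1) j = PI"
    using clear_outside_with_XY[OF assms(1) k(1), of ?A1 ?B1] C1(2,3) by auto
  show ?thesis
    using L0C1 C1(3) C2 k(1)
    by (intro exI[of _ "L0 @ C1 @ C2"] exI[of _ k]) simp
qed

lemma anticommute_rest_off_iff:
  "q < n \<Longrightarrow>
    anticommute n (rest_off q P) (rest_off q Q) \<longleftrightarrow> odd (anticomm_count ({..<n} - {q}) P Q)"
  by (simp add: anticommute_iff_odd_count anticomm_count_def rest_off_def sum.remove
      anticommute1_def b2n_def)

lemma anticommute_split_qubit:
  "q < n \<Longrightarrow> anticommute n P Q \<longleftrightarrow>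
    (anticommute1 (op P q) (op Q q) \<noteq> anticommute n (rest_off q P) (rest_off q Q))"
proof -
  assume "q < n"
  then have "anticomm_count {..<n} P Q =
      b2n (anticommute1 (op P q) (op Q q)) + anticomm_count ({..<n} - {q}) P Q"
    by (simp add: anticomm_count_def sum.remove)
  with \<open>q < n\<close> show ?thesis
    by (simp add: anticommute_iff_odd_count[of n P Q] anticommute_rest_off_iff)
qed

lemma anticommute_single_qubit_support:
  assumes "q < n" "supported_in n P {q}"
  shows "anticommute n P Q \<longleftrightarrow> anticommute1 (op P q) (op Q q)"
proof -
  have "anticomm_count ({..<n} - {q}) P Q = 0"
    using assms(2) unfolding anticomm_count_def supported_in_def
    by (intro sum.neutral) (auto simp: anticommute1_def b2n_def)
  then show ?thesis
    using assms(1) by (simp add: anticommute_split_qubit[OF assms(1), of P Q] anticommute_rest_off_iff)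
qed

lemma anticommute1_iff_signature:
  assumes "anticommute1 a b"
  shows "anticommute1 c d \<longleftrightarrow>
    (anticommute1 a c, anticommute1 b c) \<noteq> (False, False) \<and>
    (anticommute1 a d, anticommute1 b d) \<noteq> (False, False) \<and>
    (anticommute1 a c, anticommute1 b c) \<noteq> (anticommute1 a d, anticommute1 b d)"
  using assms by (cases a; cases b; cases c; cases d; simp add: anticommute1_def)

lemma signature_table:
  "(b2n ac, b2n bc, b2n ad, b2n bd, b2n cd) \<in>
      {(0,0,0,0,1),(0,0,0,1,1),(0,0,1,0,1),(0,0,1,1,1),(0,1,0,0,1),(0,1,0,1,1),
       (0,1,1,0,0),(0,1,1,1,0),(1,0,0,0,1),(1,0,0,1,0),(1,0,1,0,1),(1,0,1,1,0),
       (1,1,0,0,1),(1,1,0,1,0),(1,1,1,0,0),(1,1,1,1,1)}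
    \<longleftrightarrow> (cd \<noteq> ((ac, bc) \<noteq> (False, False) \<and> (ad, bd) \<noteq> (False, False) \<and> (ac, bc) \<noteq> (ad, bd)))"
  by (cases ac; cases bc; cases ad; cases bd; cases cd; simp add: b2n_def)

lemma two_qubit_support_of_rest_anticommute:
  assumes "circuit_on n C'" "q < n"
    and "supported_in n (conj_circ C' A) {q}" "supported_in n (conj_circ C' B) {q}"
    and "anticommute n (rest_off q (conj_circ C' X)) (rest_off q (conj_circ C' Y))"
  shows "\<exists>C q1 q2. circuit_on n C \<and> q1 < n \<and> q2 < n \<and> q1 \<noteq> q2 \<and>
    supported_in n (conj_circ C A) {q1, q2} \<and> supported_in n (conj_circ C B) {q1, q2} \<and>
    supported_in n (conj_circ C X) {q1, q2} \<and> supported_in n (conj_circ C Y) {q1, q2}"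
proof -
  let ?T = "{..<n} - {q}"
  have "odd (anticomm_count ?T (conj_circ C' X) (conj_circ C' Y))"
    using assms(5) anticommute_rest_off_iff[OF assms(2)] by simp
  then obtain C k where C: "circuit_in ?T C" "k \<in> ?T"
    and XY: "\<forall>j\<in>?T - {k}. op (conj_circ C (conj_circ C' X)) j = PI \<and>
      op (conj_circ C (conj_circ C' Y)) j = PI"
    using odd_anticomm_count_localize[of ?T] by blast
  have AB: "supported_in n (conj_circ (C' @ C) P) {q, k}"
    if "supported_in n (conj_circ C' P) {q}" for P
  proof -
    have "op (conj_circ C (conj_circ C' P)) = op (conj_circ C' P)"
      using that by (intro op_conj_circ_idle[OF C(1)]) (auto simp: supported_in_def)
    with that show ?thesis
      by (auto simp: supported_in_def)
  qed
  have "supported_in n (conj_circ (C' @ C) X) {q, k}" "supported_in n (conj_circ (C' @ C) Y) {q, k}"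
    using XY by (auto simp: supported_in_def)
  moreover have "circuit_on n (C' @ C)"
    using assms(1) circuit_in_mono[OF C(1)] by (auto simp: circuit_on_iff_circuit_in)
  moreover have "k < n" "q \<noteq> k"
    using C(2) by auto
  ultimately show ?thesis
    using assms(2-4) AB by blast
qed

theorem mainTheorem5:
  fixes n q :: nat and Pa Pb Pc Pd :: pstring and C' :: circuit
  assumes "n \<ge> 2"
    and "valid_pstring n Pa" "valid_pstring n Pb" "valid_pstring n Pc" "valid_pstring n Pd"
    and "anticommute n Pa Pb"
    and "circuit_on n C'" and "q < n"
    and "supported_in n (conj_circ C' Pa) {q}"
    and "supported_in n (conj_circ C' Pb) {q}"
  shows
    "let aac = anticommute n Pa Pc; abc = anticommute n Pb Pc;
         aad = anticommute n Pa Pd; abd = anticommute n Pb Pd;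
         acd = anticommute n Pc Pd;
         beta = ((aac, abc) \<noteq> (False, False) \<and> (aad, abd) \<noteq> (False, False)
                 \<and> (aac, abc) \<noteq> (aad, abd))
     in (anticommute n (rest_off q (conj_circ C' Pc)) (rest_off q (conj_circ C' Pd))
           \<longleftrightarrow> (acd \<noteq> beta))
      \<and> ((acd \<noteq> beta) \<longleftrightarrow>
           (b2n aac, b2n abc, b2n aad, b2n abd, b2n acd) \<in>
             {(0,0,0,0,1),(0,0,0,1,1),(0,0,1,0,1),(0,0,1,1,1),(0,1,0,0,1),(0,1,0,1,1),
              (0,1,1,0,0),(0,1,1,1,0),(1,0,0,0,1),(1,0,0,1,0),(1,0,1,0,1),(1,0,1,1,0),
              (1,1,0,0,1),(1,1,0,1,0),(1,1,1,0,0),(1,1,1,1,1)})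
      \<and> ((acd \<noteq> beta) \<longrightarrow>
           (\<exists>C q1 q2. circuit_on n C \<and> q1 < n \<and> q2 < n \<and> q1 \<noteq> q2 \<and>
              supported_in n (conj_circ C Pa) {q1, q2} \<and>
              supported_in n (conj_circ C Pb) {q1, q2} \<and>
              supported_in n (conj_circ C Pc) {q1, q2} \<and>
              supported_in n (conj_circ C Pd) {q1, q2}))"
proof -
  let ?t = "\<lambda>P. op (conj_circ C' P) q"
  let ?R = "anticommute n (rest_off q (conj_circ C' Pc)) (rest_off q (conj_circ C' Pd))"
  have a: "anticommute n Pa P \<longleftrightarrow> anticommute1 (?t Pa) (?t P)" for P
    using anticommute_conj_circ[OF assms(7), of Pa P]
      anticommute_single_qubit_support[OF assms(8,9)] by simp
  have b: "anticommute n Pb P \<longleftrightarrow> anticommute1 (?t Pb) (?t P)" for P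
    using anticommute_conj_circ[OF assms(7), of Pb P]
      anticommute_single_qubit_support[OF assms(8,10)] by simp
  have cd: "anticommute n Pc Pd \<longleftrightarrow> (anticommute1 (?t Pc) (?t Pd) \<noteq> ?R)"
    using anticommute_conj_circ[OF assms(7), of Pc Pd]
      anticommute_split_qubit[OF assms(8), of "conj_circ C' Pc" "conj_circ C' Pd"] by simp
  have "anticommute1 (?t Pa) (?t Pb)"
    using a assms(6) by simp
  note signature = anticommute1_iff_signature[OF this, of "?t Pc" "?t Pd"]
  have "?R \<Longrightarrow> \<exists>C q1 q2. circuit_on n C \<and> q1 < n \<and> q2 < n \<and> q1 \<noteq> q2 \<and>
              supported_in n (conj_circ C Pa) {q1, q2} \<and>
              supported_in n (conj_circ C Pb) {q1, q2} \<and>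
              supported_in n (conj_circ C Pc) {q1, q2} \<and>
              supported_in n (conj_circ C Pd) {q1, q2}"
    using two_qubit_support_of_rest_anticommute[OF assms(7,8,9,10)] by blast
  then show ?thesis
    unfolding Let_def a b cd signature_table signature by blast
qed

end
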